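(* Let $(P_t)_{t\in\mathbb{R}_+}$ be a stochastically monotone Feller semigroup on $\mathbb{R}$, $n\ge2$, $t=k2^{-m_0}$ a positive dyadic rational ($k\ge1$, $m_0\ge0$ integers), and $m\ge m_0$. Then for all $\mathbf{x},\mathbf{y}\in\overline{\mathbb{R}}^n$, $$W_1^{(n)}\left(Q^{(n),m}_t(\mathbf{x},\cdot),Q^{(n),m}_t(\mathbf{y},\cdot)\right)\le\sum_{i=1}^n|\tilde{P}_t\phi(y_i)-\tilde{P}_t\phi(x_i)|.$$
   Context: $\phi=\tanh$ on $\overline{\mathbb{R}}=[-\infty,+\infty]$ with $\phi(\pm\infty)=\pm1$; $\overline{\mathbb{R}}^n$ carries the metric $d_n(\mathbf{x},\mathbf{y})=\sum_i|\phi(y_i)-\phi(x_i)|$ and $W_1^{(n)}(\mu,\nu)=\sup\{|\int f\,d\mu-\int f\,d\nu|: f \text{ 1-Lipschitz for } d_n\}$. $\tilde{P}_t(x,B)=P_t(x,B\cap\mathbb{R})$ for $x\in\mathbb{R}$, $\tilde{P}_t(\pm\infty,\cdot)=\delta_{\pm\infty}$. For $x\in\mathbb{R}$, $F^{[-1]}_{x,t}(u)=\inf\{y\in\mathbb{R}:P_t(x,(-\infty,y])\ge u\}$, $F^{[-1]}_{\pm\infty,t}\equiv\pm\infty$; $Q^{(n)}_s(\mathbf{x},\cdot)$ is the law of $(F^{[-1]}_{x_i,s}(U))_{i\le n}$, $U$ uniform on $[0,1]$; and $Q^{(n),m}_t=[Q^{(n)}_{2^{-m}}]^{k2^{m-m_0}}$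 (iterated composition of Markov kernels). Feller: $P_t$ maps $\mathcal{C}_0(\mathbb{R})$ into itself with $\sup|P_tf-f|\to0$ as $t\to0^+$; stochastically monotone: $P_t$ maps bounded non-decreasing Borel functions to non-decreasing functions. *)

theory Defs
  imports "HOL-Probability.Probability"
begin

definition phi :: "ereal \<Rightarrow> real" where
  "phi x = (case x of ereal r \<Rightarrow> tanh r | PInfty \<Rightarrow> 1 | MInfty \<Rightarrow> -1)"

definition C0 :: "(real \<Rightarrow> real) \<Rightarrow> bool" where
  "C0 f \<longleftrightarrow> continuous_on UNIV f \<and> (f \<longlongrightarrow> 0) at_infinity"

definition Pf :: "(real \<Rightarrow> real \<Rightarrow> real measure) \<Rightarrow> real \<Rightarrow> (real \<Rightarrow> real) \<Rightarrow> real \<Rightarrow> real" where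
  "Pf P t f x = (\<integral>y. f y \<partial>(P t x))"

definition markov_semigroup :: "(real \<Rightarrow> real \<Rightarrow> real measure) \<Rightarrow> bool" where
  "markov_semigroup P \<longleftrightarrow>
     (\<forall>t\<ge>0. P t \<in> borel \<rightarrow>\<^sub>M prob_algebra borel) \<and>
     (\<forall>x. P 0 x = return borel x) \<and>
     (\<forall>s\<ge>0. \<forall>t\<ge>0. \<forall>x. P (s + t) x = (P s x \<bind> P t))"

definition feller :: "(real \<Rightarrow> real \<Rightarrow> real measure) \<Rightarrow> bool" where
  "feller P \<longleftrightarrow>
     (\<forall>t\<ge>0. \<forall>f. C0 f \<longrightarrow> C0 (Pf P t f)) \<and>
     (\<forall>f. C0 f \<longrightarrow> ((\<lambda>t. SUP x. \<bar>Pf P t f x - f x\<bar>) \<longlongrightarrow> 0) (at_right 0))"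

definition stoch_monotone :: "(real \<Rightarrow> real \<Rightarrow> real measure) \<Rightarrow> bool" where
  "stoch_monotone P \<longleftrightarrow>
     (\<forall>t\<ge>0. \<forall>f. f \<in> borel_measurable borel \<and> bounded (range f) \<and> mono f \<longrightarrow> mono (Pf P t f))"

definition Ptilde_phi :: "(real \<Rightarrow> real \<Rightarrow> real measure) \<Rightarrow> real \<Rightarrow> ereal \<Rightarrow> real" where
  "Ptilde_phi P t x = (case x of ereal r \<Rightarrow> (\<integral>y. tanh y \<partial>(P t r)) | PInfty \<Rightarrow> 1 | MInfty \<Rightarrow> -1)"

definition quantile :: "(real \<Rightarrow> real \<Rightarrow> real measure) \<Rightarrow> real \<Rightarrow> ereal \<Rightarrow> real \<Rightarrow> ereal" where
  "quantile P s x u = (case x of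
      ereal r \<Rightarrow> Inf (ereal ` {y. u \<le> measure (P s r) {..y}})
    | PInfty \<Rightarrow> \<infinity> | MInfty \<Rightarrow> -\<infinity>)"

abbreviation ERn :: "('n \<Rightarrow> ereal) measure" where
  "ERn \<equiv> (\<Pi>\<^sub>M i\<in>UNIV. (borel :: ereal measure))"

definition Qn :: "(real \<Rightarrow> real \<Rightarrow> real measure) \<Rightarrow> real \<Rightarrow> ('n \<Rightarrow> ereal) \<Rightarrow> ('n \<Rightarrow> ereal) measure" where
  "Qn P s x = distr (uniform_measure lborel {0..1::real}) ERn (\<lambda>u i. quantile P s (x i) u)"

fun kiter :: "'a measure \<Rightarrow> ('a \<Rightarrow> 'a measure) \<Rightarrow> nat \<Rightarrow> 'a \<Rightarrow> 'a measure" where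
  "kiter M K 0 x = return M x"
| "kiter M K (Suc j) x = (kiter M K j x \<bind> K)"

definition dn :: "('n::finite \<Rightarrow> ereal) \<Rightarrow> ('n \<Rightarrow> ereal) \<Rightarrow> real" where
  "dn x y = (\<Sum>i\<in>UNIV. \<bar>phi (y i) - phi (x i)\<bar>)"

definition W1 :: "('n::finite \<Rightarrow> ereal) measure \<Rightarrow> ('n \<Rightarrow> ereal) measure \<Rightarrow> real" where
  "W1 \<mu> \<nu> = Sup {\<bar>(\<integral>z. f z \<partial>\<mu>) - (\<integral>z. f z \<partial>\<nu>)\<bar> | f.
                   \<forall>a b. \<bar>f a - f b\<bar> \<le> dn a b}"

end

theory Submission
  imports Defs
begin

text \<open>
  Run the chains started at x and at y as the two halves of one chain indexed by 'n + 'n, driven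
  at each step by a single uniform variable u through the quantile maps F^{[-1]}_{.,s}(u).
  Stochastic monotonicity makes F^{[-1]}_{x,s}(u) monotone in x, so coordinates that start
  ordered stay ordered almost surely, while each coordinate on its own is a chain with kernel
  tilde P_s, whose N-step law is tilde P_{Ns}. For f 1-Lipschitz for d_n, the difference of the
  expectations of f under the two halves is at most the sum over i of E|phi(Y_i) - phi(X_i)|;
  as phi is monotone and X_i, Y_i are ordered, this expectation equals
  |tilde P_{Ns} phi(y_i) - tilde P_{Ns} phi(x_i)|.
\<close>

section \<open>Iterated Markov kernels\<close>

lemma measurable_kiter:
  assumes "K \<in> M \<rightarrow>\<^sub>M prob_algebra M"
  shows "kiter M K j \<in> M \<rightarrow>\<^sub>M prob_algebra M"
proof (induction j)
  case 0
  have "kiter M K 0 = return M" by (rule ext) simp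
  then show ?case by simp
next
  case (Suc j)
  have "kiter M K (Suc j) = (\<lambda>x. kiter M K j x \<bind> K)" by (rule ext) simp
  then show ?case using measurable_bind_prob_space[OF Suc assms] by simp
qed

lemma kiter_prob_space:
  assumes "K \<in> M \<rightarrow>\<^sub>M prob_algebra M" and "z \<in> space M"
  shows "prob_space (kiter M K j z)" and "sets (kiter M K j z) = sets M"
    and "space (kiter M K j z) = space M"
proof -
  show "prob_space (kiter M K j z)" and sets: "sets (kiter M K j z) = sets M"
    using measurable_space[OF measurable_kiter[OF assms(1)] assms(2), of j]
    by (auto simp: space_prob_algebra)
  show "space (kiter M K j z) = space M" using sets_eq_imp_space_eq[OF sets] .
qed

lemma measurable_kiter_iff:
  assumes "K \<in> M \<rightarrow>\<^sub>M prob_algebra M" and "z \<in> space M"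
  shows "f \<in> kiter M K j z \<rightarrow>\<^sub>M N \<longleftrightarrow> f \<in> M \<rightarrow>\<^sub>M N"
  by (simp add: measurable_cong_sets[OF kiter_prob_space(2)[OF assms] refl])

lemma distr_kiter:
  assumes K: "K \<in> M \<rightarrow>\<^sub>M prob_algebra M" and K': "K' \<in> N \<rightarrow>\<^sub>M prob_algebra N"
    and p: "p \<in> M \<rightarrow>\<^sub>M N"
    and intertwine: "\<And>z. z \<in> space M \<Longrightarrow> distr (K z) N p = K' (p z)"
    and z: "z \<in> space M"
  shows "distr (kiter M K j z) N p = kiter N K' j (p z)"
proof (induction j)
  case 0
  then show ?case using distr_return[OF p z] by simp
next
  case (Suc j)
  let ?\<mu> = "kiter M K j z"
  note \<mu> = kiter_prob_space[OF K z, of j]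
  have ne: "space ?\<mu> \<noteq> {}" using prob_space.not_empty[OF \<mu>(1)] .
  have K\<mu>: "K \<in> ?\<mu> \<rightarrow>\<^sub>M subprob_algebra M"
    using measurable_prob_algebraD[OF K] by (simp add: measurable_kiter_iff[OF K z])
  have "distr (kiter M K (Suc j) z) N p = ?\<mu> \<bind> (\<lambda>w. distr (K w) N p)"
    using distr_bind[OF K\<mu> ne p] by simp
  also have "\<dots> = ?\<mu> \<bind> (\<lambda>w. K' (p w))"
    by (rule bind_cong) (auto simp: \<mu> intertwine)
  also have "\<dots> = distr ?\<mu> N p \<bind> K'"
    using bind_distr[OF _ measurable_prob_algebraD[OF K'] ne, of p] p
    by (simp add: measurable_kiter_iff[OF K z])
  finally show ?case using Suc by simp
qed

lemma AE_kiter: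
  assumes K: "K \<in> M \<rightarrow>\<^sub>M prob_algebra M"
    and S: "Measurable.pred M S"
    and invariant: "\<And>z. z \<in> space M \<Longrightarrow> S z \<Longrightarrow> AE w in K z. S w"
    and z: "z \<in> space M" and "S z"
  shows "AE w in kiter M K j z. S w"
proof (induction j)
  case 0
  have "kiter M K 0 z = return M z" by simp
  then show ?case using AE_return[OF z S] \<open>S z\<close> by (simp only:)
next
  case (Suc j)
  have "AE w in kiter M K j z. S w \<longrightarrow> (AE y in K w. S y)"
    by (rule AE_I2) (simp add: invariant kiter_prob_space(3)[OF K z])
  with Suc have "AE w in kiter M K j z. AE y in K w. S y"
    by (rule AE_mp)
  moreover have "K \<in> kiter M K j z \<rightarrow>\<^sub>M subprob_algebra M"
    using measurable_prob_algebraD[OF K] by (simp add: measurable_kiter_iff[OF K z])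
  ultimately show ?case
    unfolding kiter.simps using AE_bind[OF _ S] by blast
qed

section \<open>The map phi and the metric d_n\<close>

lemma phi_simps [simp]: "phi (ereal r) = tanh r" "phi \<infinity> = 1" "phi (-\<infinity>) = -1"
  by (simp_all add: phi_def)

lemma phi_mono: "a \<le> b \<Longrightarrow> phi a \<le> phi b"
  by (cases a; cases b)
     (auto intro: less_imp_le[OF tanh_real_lt_1] less_imp_le[OF tanh_real_gt_neg1])

lemma abs_phi_le_1: "\<bar>phi a\<bar> \<le> 1"
  by (cases a)
     (auto simp: abs_le_iff intro: less_imp_le[OF tanh_real_lt_1] less_imp_le[OF tanh_real_gt_neg1])

lemma at_PInf_ereal: "at (\<infinity>::ereal) = filtermap ereal at_top"
  using at_eq_sup_left_right[of "\<infinity>::ereal"] trivial_limit_at_right_top[where 'a=ereal]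
  by (simp add: top_ereal_def at_left_PInf)

lemma at_MInf_ereal: "at (-\<infinity>::ereal) = filtermap ereal at_bot"
  using at_eq_sup_left_right[of "-\<infinity>::ereal"] trivial_limit_at_left_bot[where 'a=ereal]
  by (simp add: bot_ereal_def at_right_MInf)

text \<open>Each filter at x is the image under ereal of a filter on the reals (at r, at_top or
  at_bot), on which phi is just tanh.\<close>
lemma isCont_phi: "isCont phi x"
proof -
  have tanh: "phi \<circ> ereal = tanh" by auto
  show ?thesis
  proof (cases x)
    case (real r)
    have "isCont tanh r"
      using cosh_real_pos[of r] by (intro isCont_tanh) simp
    then show ?thesis
      unfolding isCont_def real by (simp add: at_ereal tendsto_compose_filtermap[symmetric] tanh)
  next
    case PInf
    then show ?thesis
      unfolding isCont_def
      by (simp add: at_PInf_ereal tendsto_compose_filtermap[symmetric] tanh tanh_real_at_top)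
  next
    case MInf
    then show ?thesis
      unfolding isCont_def
      by (simp add: at_MInf_ereal tendsto_compose_filtermap[symmetric] tanh tanh_real_at_bot)
  qed
qed

lemma continuous_on_phi: "continuous_on A phi"
  by (simp add: continuous_at_imp_continuous_on isCont_phi)

lemma borel_measurable_phi [measurable]: "phi \<in> borel_measurable borel"
  by (rule borel_measurable_continuous_onI[OF continuous_on_phi])

lemma dn_le: "dn (a :: 'n::finite \<Rightarrow> ereal) b \<le> 2 * CARD('n)"
proof -
  have "dn a b \<le> (\<Sum>i\<in>(UNIV::'n set). 2)"
    unfolding dn_def
  proof (rule sum_mono)
    fix i
    show "\<bar>phi (b i) - phi (a i)\<bar> \<le> 2"
      using abs_phi_le_1[of "b i"] abs_phi_le_1[of "a i"] by linarith
  qed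
  then show ?thesis by simp
qed

lemma continuous_on_dn: "continuous_on UNIV (dn a)"
  unfolding dn_def
  by (intro continuous_intros continuous_on_compose2[OF continuous_on_phi]
      continuous_on_product_coordinates) auto

lemma dn_lipschitz_continuous:
  fixes f :: "('n::finite \<Rightarrow> ereal) \<Rightarrow> real"
  assumes lip: "\<forall>a b. \<bar>f a - f b\<bar> \<le> dn a b"
  shows "continuous_on UNIV f"
  unfolding continuous_on_def
proof
  fix w :: "'n \<Rightarrow> ereal"
  have bound: "\<bar>f v - f w\<bar> \<le> dn w v" for v
    using lip[rule_format, of w v] by (simp add: abs_minus_commute)
  have "(dn w \<longlongrightarrow> dn w w) (at w within UNIV)"
    using continuous_on_dn[of w] by (simp add: continuous_on_def)
  then have "(dn w \<longlongrightarrow> 0) (at w)" by (simp add: dn_def)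
  then have "((\<lambda>v. f v - f w) \<longlongrightarrow> 0) (at w)"
    by (rule Lim_null_comparison[OF always_eventually, rotated]) (simp add: bound)
  then show "(f \<longlongrightarrow> f w) (at w within UNIV)" by (simp add: LIM_zero_iff)
qed

lemma dn_lipschitz_measurable:
  fixes f :: "('n::finite \<Rightarrow> ereal) \<Rightarrow> real"
  assumes "\<forall>a b. \<bar>f a - f b\<bar> \<le> dn a b"
  shows "f \<in> borel_measurable ERn"
  using borel_measurable_continuous_onI[OF dn_lipschitz_continuous[OF assms]]
  by (simp cong: measurable_cong_sets add: sets_PiM_equal_borel)

lemma dn_lipschitz_bounded:
  fixes f :: "('n::finite \<Rightarrow> ereal) \<Rightarrow> real"
  assumes "\<forall>a b. \<bar>f a - f b\<bar> \<le> dn a b"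
  shows "\<bar>f v\<bar> \<le> \<bar>f c\<bar> + 2 * CARD('n)"
proof -
  have "\<bar>f v - f c\<bar> \<le> dn v c" using assms by blast
  then show ?thesis using dn_le[of v c] by linarith
qed

section \<open>Quantile transforms\<close>

lemma real_distribution_kernel:
  assumes "K \<in> N \<rightarrow>\<^sub>M prob_algebra borel" and "r \<in> space N"
  shows "real_distribution (K r)"
  using measurable_space[OF assms]
  by (auto simp: space_prob_algebra real_distribution_def real_distribution_axioms_def)

lemma measurable_real_distribution_iff:
  assumes "real_distribution M"
  shows "f \<in> M \<rightarrow>\<^sub>M N \<longleftrightarrow> f \<in> borel \<rightarrow>\<^sub>M N"
proof -
  have "M \<rightarrow>\<^sub>M N = borel \<rightarrow>\<^sub>M N"
    by (rule measurable_cong_sets) (simp_all add: real_distribution.events_eq_borel[OF assms])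
  then show ?thesis by simp
qed

lemma markov_semigroup_kernel:
  "markov_semigroup P \<Longrightarrow> 0 \<le> t \<Longrightarrow> P t \<in> borel \<rightarrow>\<^sub>M prob_algebra borel"
  by (simp add: markov_semigroup_def)

definition ereal_quantile :: "real measure \<Rightarrow> real \<Rightarrow> ereal" where
  "ereal_quantile M u = Inf (ereal ` {y. u \<le> measure M {..y}})"

lemma quantile_simps [simp]:
  "quantile P s (ereal r) u = ereal_quantile (P s r) u"
  "quantile P s \<infinity> u = \<infinity>" "quantile P s (-\<infinity>) u = -\<infinity>"
  by (simp_all add: quantile_def ereal_quantile_def)

text \<open>The direction from left to right uses right continuity of the distribution function.\<close>
lemma ereal_quantile_le_iff:
  assumes "real_distribution M"
  shows "ereal_quantile M u \<le> ereal c \<longleftrightarrow> u \<le> measure M {..c}"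
proof
  interpret real_distribution M by (rule assms)
  assume le: "ereal_quantile M u \<le> ereal c"
  have "u \<le> cdf M d" if "c < d" for d
  proof -
    have "ereal_quantile M u < ereal d" using le that by (simp add: le_less_trans)
    then obtain y where "u \<le> measure M {..y}" "y < d"
      by (auto simp: ereal_quantile_def Inf_less_iff)
    then show ?thesis using cdf_nondecreasing[of y d] by (simp add: cdf_def2)
  qed
  then have "u \<le> cdf M c"
    using cdf_is_right_cont[of c]
    by (intro tendsto_lowerbound[of "cdf M"])
       (auto simp: continuous_within intro: eventually_mono[OF eventually_at_right_less])
  then show "u \<le> measure M {..c}" by (simp add: cdf_def2)
next
  assume "u \<le> measure M {..c}"
  then show "ereal_quantile M u \<le> ereal c" by (auto simp: ereal_quantile_def intro: Inf_lower)
qed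

lemma ereal_eq_MInf_iff: "(a::ereal) = -\<infinity> \<longleftrightarrow> (\<forall>n::nat. a \<le> ereal (- real n))"
proof (cases a)
  case (real r)
  obtain n :: nat where "-r < real n" using reals_Archimedean2 by blast
  then show ?thesis using real by (auto intro!: exI[of _ n])
qed auto

lemma measurable_ereal_quantile:
  assumes K: "K \<in> N \<rightarrow>\<^sub>M prob_algebra borel"
    and f: "f \<in> M \<rightarrow>\<^sub>M N" and g: "g \<in> M \<rightarrow>\<^sub>M borel"
  shows "(\<lambda>w. ereal_quantile (K (f w)) (g w)) \<in> M \<rightarrow>\<^sub>M borel"
proof -
  define F where "F r c = measure (K r) {..c}" for r c
  have [measurable]: "(\<lambda>r. F r c) \<in> borel_measurable N" for c
    using K unfolding F_def by measurable
  have le_iff: "ereal_quantile (K r) u \<le> ereal c \<longleftrightarrow> u \<le> F r c" if "r \<in> space N" for r u c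
    unfolding F_def by (rule ereal_quantile_le_iff[OF real_distribution_kernel[OF K that]])
  have "(\<lambda>(r, u). ereal_quantile (K r) u) \<in> N \<Otimes>\<^sub>M borel \<rightarrow>\<^sub>M borel"
  proof (rule borel_measurableI_le)
    fix y :: ereal
    have "{w \<in> space (N \<Otimes>\<^sub>M borel). (case w of (r, u) \<Rightarrow> ereal_quantile (K r) u) \<le> y}
      = {w \<in> space (N \<Otimes>\<^sub>M borel). case y of
           ereal c \<Rightarrow> snd w \<le> F (fst w) c | PInfty \<Rightarrow> True
         | MInfty \<Rightarrow> (\<forall>n::nat. snd w \<le> F (fst w) (- real n))}"
    proof (cases y)
      case MInf
      have "ereal_quantile (K r) u = -\<infinity> \<longleftrightarrow> (\<forall>n::nat. u \<le> F r (- real n))"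
        if "r \<in> space N" for r u
        using ereal_eq_MInf_iff[of "ereal_quantile (K r) u"] le_iff[OF that] by simp
      then show ?thesis using MInf by (auto simp: space_pair_measure)
    qed (auto simp: le_iff space_pair_measure)
    also have "\<dots> \<in> sets (N \<Otimes>\<^sub>M borel)" by (cases y) simp_all
    finally show "{w \<in> space (N \<Otimes>\<^sub>M borel). (case w of (r, u) \<Rightarrow> ereal_quantile (K r) u) \<le> y}
      \<in> sets (N \<Otimes>\<^sub>M borel)" .
  qed
  from measurable_compose[OF measurable_Pair[OF f g] this] show ?thesis by simp
qed

abbreviation uniform01 :: "real measure" where
  "uniform01 \<equiv> uniform_measure lborel {0..1}"

lemma prob_space_uniform01: "prob_space uniform01"
  by (rule prob_space_uniform_measure) auto

lemma distr_uniform01_eq_restrict: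
  assumes h: "h \<in> borel \<rightarrow>\<^sub>M N"
  shows "distr uniform01 N h = distr (restrict_space lborel {0<..<1}) N h"
proof (rule measure_eqI)
  fix A assume "A \<in> sets (distr uniform01 N h)"
  then have A: "A \<in> sets N" by simp
  have hA: "h -` A \<in> sets borel" using measurable_sets[OF h A] by simp
  have "emeasure (distr uniform01 N h) A = emeasure lborel ({0..1} \<inter> h -` A)"
    using h hA by (simp add: emeasure_distr[OF _ A] divide_ennreal_def cong: measurable_cong_sets)
  also have "\<dots> = emeasure lborel ({0<..<1} \<inter> h -` A)"
  proof (rule emeasure_eq_AE)
    show "AE x in lborel. x \<in> {0..1} \<inter> h -` A \<longleftrightarrow> x \<in> {0<..<1} \<inter> h -` A"
      using AE_lborel_singleton[of 0] AE_lborel_singleton[of 1] by eventually_elim auto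
  qed (use hA in auto)
  also have "\<dots> = emeasure (distr (restrict_space lborel {0<..<1}) N h) A"
    using h hA
    by (simp add: emeasure_distr[OF _ A] emeasure_restrict_space space_restrict_space Int_commute
        measurable_restrict_space1 cong: measurable_cong_sets)
  finally show "emeasure (distr uniform01 N h) A
      = emeasure (distr (restrict_space lborel {0<..<1}) N h) A" .
qed simp

lemma (in cdf_distribution) ereal_quantile_eq_I:
  assumes "u \<in> {0<..<1}"
  shows "ereal_quantile M u = ereal (I u)"
proof -
  have iff: "ereal_quantile M u \<le> ereal c \<longleftrightarrow> ereal (I u) \<le> ereal c" for c
    using assms ereal_quantile_le_iff[OF real_distribution_axioms] pseudoinverse[of u c]
    by (simp add: cdf_def2)
  show ?thesis
    by (rule antisym; rule ereal_le_real) (simp_all add: iff)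
qed

lemma distr_uniform01_ereal_quantile:
  assumes "real_distribution M"
  shows "distr uniform01 borel (ereal_quantile M) = distr M borel ereal"
proof -
  interpret cdf_distribution M using assms by (rule cdf_distribution.intro)
  let ?R = "restrict_space lborel {0<..<1::real}"
  have "sets ?R = sets (restrict_space borel {0<..<1})"
    by (rule sets_restrict_space_cong) simp
  then have I: "I \<in> ?R \<rightarrow>\<^sub>M borel"
    using measurable_CI by (subst measurable_cong_sets[OF _ refl])
  have "(\<lambda>_. M) \<in> borel \<rightarrow>\<^sub>M prob_algebra (borel :: real measure)"
    by (rule measurable_const) (simp add: space_prob_algebra prob_space_axioms)
  from measurable_ereal_quantile[OF this measurable_ident measurable_ident]
  have "ereal_quantile M \<in> borel \<rightarrow>\<^sub>M borel" by (simp add: id_def)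
  then have "distr uniform01 borel (ereal_quantile M) = distr ?R borel (ereal_quantile M)"
    by (rule distr_uniform01_eq_restrict)
  also have "\<dots> = distr ?R borel (\<lambda>u. ereal (I u))"
    by (rule distr_cong) (auto simp: space_restrict_space ereal_quantile_eq_I)
  also have "\<dots> = distr (distr ?R borel I) borel ereal"
    by (subst distr_distr[OF _ I]) (simp_all add: comp_def)
  finally show ?thesis by (simp only: distr_I_eq_M)
qed

lemma measurable_quantile:
  assumes P: "P s \<in> borel \<rightarrow>\<^sub>M prob_algebra borel"
    and [measurable]: "f \<in> M \<rightarrow>\<^sub>M borel" and g: "g \<in> M \<rightarrow>\<^sub>M borel"
  shows "(\<lambda>w. quantile P s (f w) (g w)) \<in> M \<rightarrow>\<^sub>M borel"
proof -
  have [measurable]: "(\<lambda>w. ereal_quantile (P s (real_of_ereal (f w))) (g w)) \<in> M \<rightarrow>\<^sub>M borel"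
    by (rule measurable_ereal_quantile[OF P _ g]) measurable
  have "(\<lambda>w. quantile P s (f w) (g w)) = (\<lambda>w. if f w = \<infinity> then \<infinity> else if f w = -\<infinity> then -\<infinity>
      else ereal_quantile (P s (real_of_ereal (f w))) (g w))"
    by (rule ext, rename_tac w, case_tac "f w") simp_all
  also have "\<dots> \<in> M \<rightarrow>\<^sub>M borel" by measurable
  finally show ?thesis .
qed

lemma measurable_distr_uniform01:
  assumes "(\<lambda>(x, u). f x u) \<in> L \<Otimes>\<^sub>M borel \<rightarrow>\<^sub>M N"
  shows "(\<lambda>x. distr uniform01 N (f x)) \<in> L \<rightarrow>\<^sub>M prob_algebra N"
proof (rule measurable_distr_prob_space2)
  show "(\<lambda>_. uniform01) \<in> L \<rightarrow>\<^sub>M prob_algebra uniform01"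
    by (rule measurable_const) (simp add: space_prob_algebra prob_space_uniform01)
  have "sets (L \<Otimes>\<^sub>M uniform01) = sets (L \<Otimes>\<^sub>M borel)"
    by (rule sets_pair_measure_cong) simp_all
  then have "L \<Otimes>\<^sub>M uniform01 \<rightarrow>\<^sub>M N = L \<Otimes>\<^sub>M borel \<rightarrow>\<^sub>M N"
    by (rule measurable_cong_sets) simp
  then show "(\<lambda>(x, u). f x u) \<in> L \<Otimes>\<^sub>M uniform01 \<rightarrow>\<^sub>M N"
    using assms by simp
qed

section \<open>The extended semigroup\<close>

definition Ptilde :: "(real \<Rightarrow> real \<Rightarrow> real measure) \<Rightarrow> real \<Rightarrow> ereal \<Rightarrow> ereal measure" where
  "Ptilde P t x = (case x of ereal r \<Rightarrow> distr (P t r) borel ereal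
     | PInfty \<Rightarrow> return borel \<infinity> | MInfty \<Rightarrow> return borel (-\<infinity>))"

lemma Ptilde_simps [simp]:
  "Ptilde P t (ereal r) = distr (P t r) borel ereal"
  "Ptilde P t \<infinity> = return borel \<infinity>" "Ptilde P t (-\<infinity>) = return borel (-\<infinity>)"
  by (simp_all add: Ptilde_def)

lemma distr_uniform01_quantile:
  assumes "P s \<in> borel \<rightarrow>\<^sub>M prob_algebra borel"
  shows "distr uniform01 borel (quantile P s x) = Ptilde P s x"
proof -
  interpret uniform01: prob_space uniform01 by (rule prob_space_uniform01)
  show ?thesis
  proof (cases x)
    case (real r)
    have "quantile P s x = ereal_quantile (P s r)" by (rule ext) (simp add: real)
    then show ?thesis
      using distr_uniform01_ereal_quantile[OF real_distribution_kernel[OF assms]] real by simp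
  next
    case PInf
    have "quantile P s x = (\<lambda>_. \<infinity>)" by (rule ext) (simp add: PInf)
    then show ?thesis using PInf by simp
  next
    case MInf
    have "quantile P s x = (\<lambda>_. -\<infinity>)" by (rule ext) (simp add: MInf)
    then show ?thesis using MInf by simp
  qed
qed

lemma measurable_Ptilde:
  assumes "P s \<in> borel \<rightarrow>\<^sub>M prob_algebra borel"
  shows "Ptilde P s \<in> borel \<rightarrow>\<^sub>M prob_algebra borel"
proof -
  have "(\<lambda>(x, u). quantile P s x u) \<in> borel \<Otimes>\<^sub>M borel \<rightarrow>\<^sub>M borel"
    using measurable_quantile[of P s, OF assms measurable_fst measurable_snd]
    by (simp add: split_beta')
  then have "(\<lambda>x. distr uniform01 borel (quantile P s x)) \<in> borel \<rightarrow>\<^sub>M prob_algebra borel"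
    by (rule measurable_distr_uniform01)
  then show ?thesis by (simp add: distr_uniform01_quantile[of P s, OF assms])
qed

lemma bind_Ptilde:
  assumes P: "markov_semigroup P" and "0 \<le> s" "0 \<le> t"
  shows "Ptilde P t x \<bind> Ptilde P s = Ptilde P (t + s) x"
proof -
  have Ps: "Ptilde P s \<in> borel \<rightarrow>\<^sub>M subprob_algebra borel"
    using measurable_Ptilde[of P s, OF markov_semigroup_kernel[OF P \<open>0 \<le> s\<close>]]
    by (rule measurable_prob_algebraD)
  show ?thesis
  proof (cases x)
    case (real r)
    let ?M = "P t r"
    have M: "real_distribution ?M"
      using real_distribution_kernel[OF markov_semigroup_kernel[OF P \<open>0 \<le> t\<close>]] by simp
    note M_measurable = measurable_real_distribution_iff[OF M]
    have ne: "space ?M \<noteq> {}"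
      using M by (simp add: prob_space.not_empty real_distribution_def)
    have "Ptilde P t x \<bind> Ptilde P s = ?M \<bind> (\<lambda>y. Ptilde P s (ereal y))"
      using bind_distr[OF _ Ps ne, of ereal] real by (simp add: M_measurable)
    also have "\<dots> = ?M \<bind> (\<lambda>y. distr (P s y) borel ereal)" by simp
    also have "\<dots> = distr (?M \<bind> P s) borel ereal"
      using measurable_prob_algebraD[OF markov_semigroup_kernel[OF P \<open>0 \<le> s\<close>]]
      by (intro distr_bind[OF _ ne, symmetric]) (simp_all add: M_measurable, measurable)
    also have "?M \<bind> P s = P (t + s) r"
      using P assms by (simp add: markov_semigroup_def)
    finally show ?thesis using real by simp
  qed (simp_all add: bind_return[OF Ps])
qed

lemma kiter_Ptilde:
  assumes P: "markov_semigroup P" and "0 \<le> s"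
  shows "kiter borel (Ptilde P s) j x = Ptilde P (j * s) x"
proof (induction j)
  case 0
  have "P 0 r = return borel r" for r using P by (simp add: markov_semigroup_def)
  then show ?case by (cases x) (simp_all add: distr_return)
next
  case (Suc j)
  then show ?case
    using bind_Ptilde[OF P \<open>0 \<le> s\<close>, of "j * s" x] assms by (simp add: algebra_simps)
qed

lemma integral_phi_Ptilde:
  assumes "P t \<in> borel \<rightarrow>\<^sub>M prob_algebra borel"
  shows "(\<integral>v. phi v \<partial>Ptilde P t x) = Ptilde_phi P t x"
proof (cases x)
  case (real r)
  have M: "real_distribution (P t r)" using real_distribution_kernel[OF assms] by simp
  have "ereal \<in> P t r \<rightarrow>\<^sub>M borel"
    unfolding measurable_real_distribution_iff[OF M] by measurable
  from integral_distr[OF this borel_measurable_phi] show ?thesis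
    using real by (simp add: Ptilde_phi_def)
qed (simp_all add: integral_return Ptilde_phi_def)

section \<open>The synchronous quantile coupling\<close>

lemma stoch_monotone_measure_atMost_antimono:
  assumes mono: "stoch_monotone P" and "0 \<le> s"
    and P: "P s \<in> borel \<rightarrow>\<^sub>M prob_algebra borel" and "r \<le> r'"
  shows "measure (P s r') {..c} \<le> measure (P s r) {..c}"
proof -
  let ?f = "indicator {c<..} :: real \<Rightarrow> real"
  have "bounded (range ?f)"
    by (rule bounded_subset[of "{0, 1}"]) (auto simp: indicator_def)
  moreover have "mono ?f" by (auto simp: mono_def indicator_def)
  ultimately have "Pf P s ?f r \<le> Pf P s ?f r'"
    using mono \<open>0 \<le> s\<close> \<open>r \<le> r'\<close> by (auto simp: stoch_monotone_def mono_def)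
  moreover have "Pf P s ?f q = 1 - measure (P s q) {..c}" for q
  proof -
    interpret real_distribution "P s q" using real_distribution_kernel[OF P] by simp
    have "Pf P s ?f q = prob (space (P s q) - {..c})"
      by (simp add: Pf_def Compl_eq_Diff_UNIV[symmetric])
    also have "\<dots> = 1 - prob {..c}" by (rule prob_compl) simp
    finally show ?thesis .
  qed
  ultimately show ?thesis by simp
qed

lemma quantile_mono:
  assumes "stoch_monotone P" and "0 \<le> s"
    and P: "P s \<in> borel \<rightarrow>\<^sub>M prob_algebra borel" and "x \<le> x'"
  shows "quantile P s x u \<le> quantile P s x' u"
proof (cases x; cases x')
  fix r r' assume x: "x = ereal r" and x': "x' = ereal r'"
  then have "{y. u \<le> measure (P s r') {..y}} \<subseteq> {y. u \<le> measure (P s r) {..y}}"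
    using stoch_monotone_measure_atMost_antimono[OF assms(1,2) P, of r r'] \<open>x \<le> x'\<close>
    by (auto intro: order_trans)
  then show ?thesis
    unfolding x x' by (auto simp: ereal_quantile_def intro: Inf_superset_mono)
qed (use \<open>x \<le> x'\<close> in auto)

lemma in_space_ERn [simp]: "z \<in> space ERn"
  by (simp add: space_PiM)

lemma measurable_reindex: "(\<lambda>w i. w (g i)) \<in> ERn \<rightarrow>\<^sub>M ERn"
  by (rule measurable_PiM_single') auto

lemma measurable_quantile_vector:
  assumes "P s \<in> borel \<rightarrow>\<^sub>M prob_algebra borel"
  shows "(\<lambda>(x, u) i. quantile P s (x i) u) \<in> (ERn :: ('n \<Rightarrow> ereal) measure) \<Otimes>\<^sub>M borel \<rightarrow>\<^sub>M ERn"
proof (rule measurable_PiM_single')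
  fix i :: 'n
  have "(\<lambda>w. quantile P s (fst w i) (snd w)) \<in> (ERn :: ('n \<Rightarrow> ereal) measure) \<Otimes>\<^sub>M borel \<rightarrow>\<^sub>M borel"
    by (rule measurable_quantile[of P s, OF assms]) measurable
  then show "(\<lambda>w. (case w of (x, u) \<Rightarrow> \<lambda>i. quantile P s (x i) u) i) \<in> ERn \<Otimes>\<^sub>M borel \<rightarrow>\<^sub>M borel"
    by (simp add: split_beta')
qed (auto simp: space_pair_measure)

lemma measurable_quantile_vector_uniform01:
  fixes z :: "'n \<Rightarrow> ereal"
  assumes "P s \<in> borel \<rightarrow>\<^sub>M prob_algebra borel"
  shows "(\<lambda>u i. quantile P s (z i) u) \<in> uniform01 \<rightarrow>\<^sub>M ERn"
proof -
  have "uniform01 \<rightarrow>\<^sub>M ERn = borel \<rightarrow>\<^sub>M (ERn :: ('n \<Rightarrow> ereal) measure)"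
    by (rule measurable_cong_sets) simp_all
  then show ?thesis
    using measurable_Pair2[OF measurable_quantile_vector[of P s, OF assms], of z]
    by (simp add: space_PiM)
qed

lemma measurable_Qn:
  assumes "P s \<in> borel \<rightarrow>\<^sub>M prob_algebra borel"
  shows "Qn P s \<in> (ERn :: ('n \<Rightarrow> ereal) measure) \<rightarrow>\<^sub>M prob_algebra ERn"
  using measurable_distr_uniform01[OF measurable_quantile_vector[of P s, OF assms]]
  by (simp add: Qn_def[abs_def])

lemma distr_Qn_reindex:
  fixes z :: "'n \<Rightarrow> ereal" and g :: "'m \<Rightarrow> 'n"
  assumes "P s \<in> borel \<rightarrow>\<^sub>M prob_algebra borel"
  shows "distr (Qn P s z) ERn (\<lambda>w i. w (g i)) = Qn P s (\<lambda>i. z (g i))"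
  unfolding Qn_def
  by (subst distr_distr[OF measurable_reindex
        measurable_quantile_vector_uniform01[of P s, OF assms]])
     (simp_all add: comp_def)

lemma distr_Qn_coordinate:
  fixes z :: "'n \<Rightarrow> ereal"
  assumes "P s \<in> borel \<rightarrow>\<^sub>M prob_algebra borel"
  shows "distr (Qn P s z) borel (\<lambda>w. w j) = Ptilde P s (z j)"
proof -
  have "(\<lambda>w. w j) \<in> ERn \<rightarrow>\<^sub>M borel" by measurable
  then have "distr (Qn P s z) borel (\<lambda>w. w j) = distr uniform01 borel (quantile P s (z j))"
    unfolding Qn_def
    by (subst distr_distr[OF _ measurable_quantile_vector_uniform01[of P s, OF assms]])
       (simp_all add: comp_def)
  then show ?thesis by (simp add: distr_uniform01_quantile[of P s, OF assms])
qed

lemma AE_Qn_le: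
  fixes z :: "'n \<Rightarrow> ereal"
  assumes "stoch_monotone P" and "0 \<le> s"
    and P: "P s \<in> borel \<rightarrow>\<^sub>M prob_algebra borel" and "z a \<le> z b"
  shows "AE w in Qn P s z. w a \<le> w b"
proof -
  have "{w \<in> space ERn. w a \<le> w b} \<in> sets ERn" by measurable
  moreover have "AE u in uniform01. quantile P s (z a) u \<le> quantile P s (z b) u"
    using quantile_mono[OF assms] by simp
  ultimately show ?thesis
    unfolding Qn_def
    by (simp add: AE_distr_iff[OF measurable_quantile_vector_uniform01[of P s, OF P]])
qed

lemma kiter_Qn_reindex:
  fixes z :: "'n \<Rightarrow> ereal" and g :: "'m \<Rightarrow> 'n"
  assumes "P s \<in> borel \<rightarrow>\<^sub>M prob_algebra borel"
  shows "distr (kiter ERn (Qn P s) N z) ERn (\<lambda>w i. w (g i)) = kiter ERn (Qn P s) N (\<lambda>i. z (g i))"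
  by (rule distr_kiter[OF measurable_Qn[of P s, OF assms] measurable_Qn[of P s, OF assms]
        measurable_reindex])
     (simp_all add: distr_Qn_reindex[of P s, OF assms])

lemma kiter_Qn_coordinate:
  fixes z :: "'n \<Rightarrow> ereal"
  assumes "markov_semigroup P" and "0 \<le> s"
  shows "distr (kiter ERn (Qn P s) N z) borel (\<lambda>w. w j) = Ptilde P (N * s) (z j)"
proof -
  note P = markov_semigroup_kernel[OF assms]
  have "distr (kiter ERn (Qn P s) N z) borel (\<lambda>w. w j) = kiter borel (Ptilde P s) N (z j)"
    by (rule distr_kiter[OF measurable_Qn[of P s, OF P] measurable_Ptilde[of P s, OF P]])
       (simp_all add: distr_Qn_coordinate[of P s, OF P])
  then show ?thesis by (simp add: kiter_Ptilde[OF assms])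
qed

lemma integral_phi_kiter_Qn:
  fixes z :: "'n::finite \<Rightarrow> ereal"
  assumes P: "markov_semigroup P" and "0 \<le> s"
  shows "(\<integral>w. phi (w j) \<partial>kiter ERn (Qn P s) N z) = Ptilde_phi P (N * s) (z j)"
proof -
  note Ps = markov_semigroup_kernel[OF assms]
  have "(\<integral>w. phi (w j) \<partial>kiter ERn (Qn P s) N z)
      = (\<integral>v. phi v \<partial>distr (kiter ERn (Qn P s) N z) borel (\<lambda>w. w j))"
    by (rule integral_distr[symmetric])
       (simp_all add: measurable_kiter_iff[OF measurable_Qn[of P s, OF Ps] in_space_ERn])
  also have "\<dots> = Ptilde_phi P (N * s) (z j)"
    unfolding kiter_Qn_coordinate[OF assms]
    by (rule integral_phi_Ptilde) (simp add: markov_semigroup_kernel[OF P] \<open>0 \<le> s\<close>)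
  finally show ?thesis .
qed

lemma AE_kiter_Qn_le:
  fixes z :: "'n \<Rightarrow> ereal"
  assumes "stoch_monotone P" and "0 \<le> s"
    and P: "P s \<in> borel \<rightarrow>\<^sub>M prob_algebra borel" and "z a \<le> z b"
  shows "AE w in kiter ERn (Qn P s) N z. w a \<le> w b"
proof -
  have "Measurable.pred ERn (\<lambda>w. w a \<le> w b)"
    unfolding pred_def by (rule borel_measurable_le) simp_all
  then show ?thesis
    by (rule AE_kiter[OF measurable_Qn[of P s, OF P]])
       (simp_all add: AE_Qn_le[OF assms(1-3)] \<open>z a \<le> z b\<close>)
qed

lemma AE_kiter_Qn_ordered:
  fixes x y :: "'n::finite \<Rightarrow> ereal"
  assumes "stoch_monotone P" and "0 \<le> s" and P: "P s \<in> borel \<rightarrow>\<^sub>M prob_algebra borel"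
  shows "(AE w in kiter ERn (Qn P s) N (case_sum x y). w (Inl i) \<le> w (Inr i))
    \<or> (AE w in kiter ERn (Qn P s) N (case_sum x y). w (Inr i) \<le> w (Inl i))"
  using AE_kiter_Qn_le[OF assms, of "case_sum x y" "Inl i" "Inr i" N]
    AE_kiter_Qn_le[OF assms, of "case_sum x y" "Inr i" "Inl i" N]
  by (cases "x i \<le> y i") auto

lemma integral_abs_diff_eq_abs_diff_integral:
  fixes X Y :: "'a \<Rightarrow> real"
  assumes "integrable M X" and "integrable M Y"
    and "(AE w in M. X w \<le> Y w) \<or> (AE w in M. Y w \<le> X w)"
  shows "(\<integral>w. \<bar>Y w - X w\<bar> \<partial>M) = \<bar>(\<integral>w. Y w \<partial>M) - (\<integral>w. X w \<partial>M)\<bar>"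
proof -
  have ordered: "(\<integral>w. \<bar>B w - A w\<bar> \<partial>M) = (\<integral>w. B w \<partial>M) - (\<integral>w. A w \<partial>M)"
    if "integrable M A" "integrable M B" "AE w in M. A w \<le> B w" for A B :: "'a \<Rightarrow> real"
  proof -
    have [measurable]: "A \<in> borel_measurable M" "B \<in> borel_measurable M"
      using that(1,2) by auto
    have "AE w in M. \<bar>B w - A w\<bar> = B w - A w"
      using that(3) by eventually_elim (simp add: abs_of_nonneg)
    then have "(\<integral>w. \<bar>B w - A w\<bar> \<partial>M) = (\<integral>w. B w - A w \<partial>M)"
      by (rule integral_cong_AE[rotated 2]) measurable
    also have "\<dots> = (\<integral>w. B w \<partial>M) - (\<integral>w. A w \<partial>M)"
      by (rule Bochner_Integration.integral_diff[OF that(2,1)])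
    finally show ?thesis .
  qed
  from assms(3) show ?thesis
  proof
    assume "AE w in M. X w \<le> Y w"
    with ordered[OF assms(1,2)] integral_mono_AE[OF assms(1,2)] show ?thesis by simp
  next
    assume "AE w in M. Y w \<le> X w"
    with ordered[OF assms(2,1)] integral_mono_AE[OF assms(2,1)] show ?thesis
      by (simp add: abs_minus_commute)
  qed
qed

lemma dn_lipschitz_coupling_le:
  fixes \<nu> :: "('n::finite + 'n \<Rightarrow> ereal) measure" and f :: "('n \<Rightarrow> ereal) \<Rightarrow> real"
  assumes "prob_space \<nu>" and sets: "sets \<nu> = sets ERn"
    and ordered: "\<And>i. (AE w in \<nu>. w (Inl i) \<le> w (Inr i)) \<or> (AE w in \<nu>. w (Inr i) \<le> w (Inl i))"
    and lip: "\<forall>a b. \<bar>f a - f b\<bar> \<le> dn a b"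
  shows "(\<integral>w. f (\<lambda>i. w (Inl i)) \<partial>\<nu>) - (\<integral>w. f (\<lambda>i. w (Inr i)) \<partial>\<nu>)
    \<le> (\<Sum>i\<in>UNIV. \<bar>(\<integral>w. phi (w (Inr i)) \<partial>\<nu>) - (\<integral>w. phi (w (Inl i)) \<partial>\<nu>)\<bar>)"
proof -
  interpret prob_space \<nu> by fact
  have "\<nu> \<rightarrow>\<^sub>M borel = ERn \<rightarrow>\<^sub>M (borel :: real measure)"
    by (rule measurable_cong_sets[OF sets refl])
  moreover have "(\<lambda>w. phi (w j)) \<in> borel_measurable ERn" for j :: "'n + 'n"
    by measurable
  ultimately have measurable_\<nu>: "(\<lambda>w. f (\<lambda>i. w (h i))) \<in> borel_measurable \<nu>"
    "(\<lambda>w. phi (w j)) \<in> borel_measurable \<nu>" for h :: "'n \<Rightarrow> 'n + 'n" and j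
    using measurable_compose[OF measurable_reindex dn_lipschitz_measurable[OF lip]] by auto
  have int_f: "integrable \<nu> (\<lambda>w. f (\<lambda>i. w (h i)))" for h :: "'n \<Rightarrow> 'n + 'n"
    using dn_lipschitz_bounded[OF lip, of _ "\<lambda>_. 0"]
    by (intro integrable_const_bound[where B="\<bar>f (\<lambda>_. 0)\<bar> + 2 * CARD('n)"])
       (simp_all add: measurable_\<nu>)
  have int_phi: "integrable \<nu> (\<lambda>w. phi (w j))" for j
    using abs_phi_le_1 by (intro integrable_const_bound[where B=1]) (simp_all add: measurable_\<nu>)
  have "(\<integral>w. f (\<lambda>i. w (Inl i)) \<partial>\<nu>) - (\<integral>w. f (\<lambda>i. w (Inr i)) \<partial>\<nu>)
      = (\<integral>w. f (\<lambda>i. w (Inl i)) - f (\<lambda>i. w (Inr i)) \<partial>\<nu>)"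
    by (rule Bochner_Integration.integral_diff[OF int_f int_f, symmetric])
  also have "\<dots> \<le> (\<integral>w. (\<Sum>i\<in>UNIV. \<bar>phi (w (Inr i)) - phi (w (Inl i))\<bar>) \<partial>\<nu>)"
  proof (rule integral_mono)
    fix w
    show "f (\<lambda>i. w (Inl i)) - f (\<lambda>i. w (Inr i)) \<le> (\<Sum>i\<in>UNIV. \<bar>phi (w (Inr i)) - phi (w (Inl i))\<bar>)"
      using lip[rule_format, of "\<lambda>i. w (Inl i)" "\<lambda>i. w (Inr i)"] by (simp add: dn_def)
  qed (use int_f int_phi in auto)
  also have "\<dots> = (\<Sum>i\<in>UNIV. (\<integral>w. \<bar>phi (w (Inr i)) - phi (w (Inl i))\<bar> \<partial>\<nu>))"
    using int_phi by (intro Bochner_Integration.integral_sum) auto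
  also have "\<dots> = (\<Sum>i\<in>UNIV. \<bar>(\<integral>w. phi (w (Inr i)) \<partial>\<nu>) - (\<integral>w. phi (w (Inl i)) \<partial>\<nu>)\<bar>)"
  proof (intro sum.cong refl)
    fix i
    have "(AE w in \<nu>. phi (w (Inl i)) \<le> phi (w (Inr i)))
        \<or> (AE w in \<nu>. phi (w (Inr i)) \<le> phi (w (Inl i)))"
      using ordered[of i] by (metis (mono_tags, lifting) eventually_mono phi_mono)
    then show "(\<integral>w. \<bar>phi (w (Inr i)) - phi (w (Inl i))\<bar> \<partial>\<nu>)
        = \<bar>(\<integral>w. phi (w (Inr i)) \<partial>\<nu>) - (\<integral>w. phi (w (Inl i)) \<partial>\<nu>)\<bar>"
      by (rule integral_abs_diff_eq_abs_diff_integral[OF int_phi int_phi])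
  qed
  finally show ?thesis .
qed

lemma integral_kiter_Qn_diff_le:
  fixes x y :: "'n::finite \<Rightarrow> ereal" and f :: "('n \<Rightarrow> ereal) \<Rightarrow> real"
  assumes P: "markov_semigroup P" and mono: "stoch_monotone P" and "0 \<le> s"
    and lip: "\<forall>a b. \<bar>f a - f b\<bar> \<le> dn a b"
  shows "(\<integral>w. f w \<partial>kiter ERn (Qn P s) N x) - (\<integral>w. f w \<partial>kiter ERn (Qn P s) N y)
    \<le> (\<Sum>i\<in>UNIV. \<bar>Ptilde_phi P (N * s) (y i) - Ptilde_phi P (N * s) (x i)\<bar>)"
proof -
  note Ps = markov_semigroup_kernel[OF P \<open>0 \<le> s\<close>]
  define \<nu> where "\<nu> = kiter ERn (Qn P s) N (case_sum x y)"
  note \<nu> = kiter_prob_space[OF measurable_Qn[of P s, OF Ps] in_space_ERn, of N "case_sum x y",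
    folded \<nu>_def]
  have "(\<integral>w. f w \<partial>kiter ERn (Qn P s) N (\<lambda>i. case_sum x y (h i))) = (\<integral>w. f (\<lambda>i. w (h i)) \<partial>\<nu>)"
    for h :: "'n \<Rightarrow> 'n + 'n"
    unfolding \<nu>_def kiter_Qn_reindex[of P s, OF Ps, symmetric]
    by (rule integral_distr)
       (simp_all add: measurable_kiter_iff[OF measurable_Qn[of P s, OF Ps] in_space_ERn]
         dn_lipschitz_measurable[OF lip] measurable_reindex)
  from this[of Inl] this[of Inr]
  have "(\<integral>w. f w \<partial>kiter ERn (Qn P s) N x) - (\<integral>w. f w \<partial>kiter ERn (Qn P s) N y)
      = (\<integral>w. f (\<lambda>i. w (Inl i)) \<partial>\<nu>) - (\<integral>w. f (\<lambda>i. w (Inr i)) \<partial>\<nu>)"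
    by simp
  also have "\<dots> \<le> (\<Sum>i\<in>UNIV. \<bar>(\<integral>w. phi (w (Inr i)) \<partial>\<nu>) - (\<integral>w. phi (w (Inl i)) \<partial>\<nu>)\<bar>)"
    by (rule dn_lipschitz_coupling_le[OF \<nu>(1,2) _ lip])
       (rule AE_kiter_Qn_ordered[OF mono \<open>0 \<le> s\<close> Ps, where N=N and x=x and y=y,
         folded \<nu>_def])
  also have "\<dots> = (\<Sum>i\<in>UNIV. \<bar>Ptilde_phi P (N * s) (y i) - Ptilde_phi P (N * s) (x i)\<bar>)"
    by (simp add: \<nu>_def integral_phi_kiter_Qn[OF P \<open>0 \<le> s\<close>])
  finally show ?thesis .
qed

lemma W1_le:
  assumes "\<And>f. \<forall>a b. \<bar>f a - f b\<bar> \<le> dn a b \<Longrightarrow> (\<integral>z. f z \<partial>\<mu>) - (\<integral>z. f z \<partial>\<nu>) \<le> R"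
  shows "W1 \<mu> \<nu> \<le> R"
  unfolding W1_def
proof (rule cSup_least)
  have "\<forall>a b. \<bar>(\<lambda>_. 0::real) a - (\<lambda>_. 0) b\<bar> \<le> dn a b"
    by (simp add: dn_def sum_nonneg)
  then have "\<bar>(\<integral>z. 0 \<partial>\<mu>) - (\<integral>z. 0 \<partial>\<nu>)\<bar>
      \<in> {\<bar>(\<integral>z. f z \<partial>\<mu>) - (\<integral>z. f z \<partial>\<nu>)\<bar> |f. \<forall>a b. \<bar>f a - f b\<bar> \<le> dn a b}"
    by (intro CollectI exI[of _ "\<lambda>_. 0"] conjI refl)
  then show "{\<bar>(\<integral>z. f z \<partial>\<mu>) - (\<integral>z. f z \<partial>\<nu>)\<bar> |f. \<forall>a b. \<bar>f a - f b\<bar> \<le> dn a b} \<noteq> {}"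
    by (rule ex_in_conv[THEN iffD1, OF exI])
next
  fix r assume "r \<in> {\<bar>(\<integral>z. f z \<partial>\<mu>) - (\<integral>z. f z \<partial>\<nu>)\<bar> |f. \<forall>a b. \<bar>f a - f b\<bar> \<le> dn a b}"
  then obtain f where r: "r = \<bar>(\<integral>z. f z \<partial>\<mu>) - (\<integral>z. f z \<partial>\<nu>)\<bar>"
    and lip: "\<forall>a b. \<bar>f a - f b\<bar> \<le> dn a b" by (auto simp only: mem_Collect_eq)
  have "\<forall>a b. \<bar>- f a - - f b\<bar> \<le> dn a b" using lip by (simp add: abs_minus_commute)
  from assms[OF this] assms[OF lip] show "r \<le> R" unfolding r by simp
qed

theorem proposition3p3:
  fixes P :: "real \<Rightarrow> real \<Rightarrow> real measure"
    and k m0 m :: nat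
    and x y :: "'n::finite \<Rightarrow> ereal"
  assumes "markov_semigroup P" and "feller P" and "stoch_monotone P"
    and "CARD('n) \<ge> 2"
    and "k \<ge> 1" and "m \<ge> m0"
  shows "W1 (kiter ERn (Qn P (1 / 2 ^ m)) (k * 2 ^ (m - m0)) x)
            (kiter ERn (Qn P (1 / 2 ^ m)) (k * 2 ^ (m - m0)) y)
         \<le> (\<Sum>i\<in>UNIV. \<bar>Ptilde_phi P (real k / 2 ^ m0) (y i) - Ptilde_phi P (real k / 2 ^ m0) (x i)\<bar>)"
proof -
  have "real k / 2 ^ m0 = real (k * 2 ^ (m - m0)) * (1 / 2 ^ m)"
    using \<open>m \<ge> m0\<close> by (simp add: field_simps flip: power_add)
  moreover have "W1 (kiter ERn (Qn P (1 / 2 ^ m)) (k * 2 ^ (m - m0)) x)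
            (kiter ERn (Qn P (1 / 2 ^ m)) (k * 2 ^ (m - m0)) y)
         \<le> (\<Sum>i\<in>UNIV. \<bar>Ptilde_phi P (real (k * 2 ^ (m - m0)) * (1 / 2 ^ m)) (y i)
                       - Ptilde_phi P (real (k * 2 ^ (m - m0)) * (1 / 2 ^ m)) (x i)\<bar>)"
    by (intro W1_le integral_kiter_Qn_diff_le[OF assms(1,3)]) simp_all
  ultimately show ?thesis by simp
qed

end
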